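(* Let $f$ be an L-additive arithmetic function whose associated completely multiplicative function $h_f$ is nonzero-valued, and let $\Lambda_f$ be the generalized von Mangoldt function associated to $f$. Then for every integer $n\geq 1$, $$f(n)=h_f(n)\sum_{d\mid n}\Lambda_f(d),$$ i.e. in terms of Dirichlet convolution, $f=h_f\ast (h_f\Lambda_f)$.
   Context: An arithmetic function is a function $\mathbb{N}\to\mathbb{C}$. An arithmetic function $f$ is L-additive (Leibniz-additive) if there is a completely multiplicative function $h_f$ (so $h_f(1)=1$ and $h_f(mn)=h_f(m)h_f(n)$ for all $m,n$) such that $f(mn)=f(m)h_f(n)+f(n)h_f(m)$ for all positive integers $m,n$; such an $h_f$ is fixed. The generalized von Mangoldt function is defined by $\Lambda_f(n)=\frac{f(p)}{h_f(p)}$ if $n=p^k$ for some prime $p$ and integer $k\geq 1$, and $\Lambda_f(n)=0$ otherwise. The Dirichlet convolution is $(F\ast G)(n)=\sum_{d\mid n}F(d)G(n/d)$, and $h_f\Lambda_f$ denotes the pointwise product. *)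

theory Defs
  imports Complex_Main "HOL-Computational_Algebra.Primes"
begin

text \<open>Arithmetic functions are modelled as functions nat \<Rightarrow> complex; only values at
  positive integers are meaningful.\<close>

definition completely_multiplicative :: "(nat \<Rightarrow> complex) \<Rightarrow> bool" where
  "completely_multiplicative h \<longleftrightarrow>
     h 1 = 1 \<and> (\<forall>m n. m > 0 \<longrightarrow> n > 0 \<longrightarrow> h (m * n) = h m * h n)"

definition L_additive_wrt :: "(nat \<Rightarrow> complex) \<Rightarrow> (nat \<Rightarrow> complex) \<Rightarrow> bool" where
  "L_additive_wrt f h \<longleftrightarrow> completely_multiplicative h \<and>
     (\<forall>m n. m > 0 \<longrightarrow> n > 0 \<longrightarrow> f (m * n) = f m * h n + f n * h m)"

definition gen_mangoldt :: "(nat \<Rightarrow> complex) \<Rightarrow> (nat \<Rightarrow> complex) \<Rightarrow> nat \<Rightarrow> complex" where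
  "gen_mangoldt f h n =
     (if \<exists>p k. prime p \<and> k \<ge> 1 \<and> n = p ^ k
      then (let p = (THE p. prime p \<and> (\<exists>k\<ge>1. n = p ^ k)) in f p / h p)
      else 0)"

definition dirichlet_conv :: "(nat \<Rightarrow> complex) \<Rightarrow> (nat \<Rightarrow> complex) \<Rightarrow> nat \<Rightarrow> complex" where
  "dirichlet_conv F G n = (\<Sum>d | d dvd n. F d * G (n div d))"

end

theory Submission
  imports Defs "HOL-Number_Theory.Prime_Powers"
begin

text \<open>Dividing the Leibniz rule by h(m n) = h m h n shows that f/h is completely additive,
  so f(n)/h(n) is the sum of f(p)/h(p) over the prime factors of n counted with multiplicity.
  Each prime power p^k dividing n contributes exactly f(p)/h(p) to the divisor sum of the
  generalized von Mangoldt function, so that sum is the same quantity. The convolution form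
  follows because h(d) h(n/d) = h(n) for every divisor d of n.\<close>

definition completely_additive :: "(nat \<Rightarrow> 'a :: cancel_comm_monoid_add) \<Rightarrow> bool" where
  "completely_additive g \<longleftrightarrow> (\<forall>m n. m > 0 \<longrightarrow> n > 0 \<longrightarrow> g (m * n) = g m + g n)"

lemma completely_additiveD:
  "completely_additive g \<Longrightarrow> m > 0 \<Longrightarrow> n > 0 \<Longrightarrow> g (m * n) = g m + g n"
  unfolding completely_additive_def by blast

lemma completely_additive_one:
  assumes "completely_additive g"
  shows "g 1 = 0"
  using completely_additiveD[OF assms, of 1 1] by simp

lemma completely_additive_prod_mset:
  assumes "completely_additive g" "\<forall>x\<in>#M. x > 0"
  shows "g (prod_mset M) = (\<Sum>x\<in>#M. g x)"
  using assms(2)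
proof (induction M)
  case empty
  show ?case using completely_additive_one[OF assms(1)] by simp
next
  case (add x M)
  then have "x > 0" "prod_mset M > 0"
    by (auto intro!: gr0I)
  with add show ?case by (simp add: completely_additiveD[OF assms(1)])
qed

lemma completely_additive_eq_sum_prime_factorization:
  assumes "completely_additive g" "n > 0"
  shows "g n = (\<Sum>p\<in>#prime_factorization n. g p)"
  using completely_additive_prod_mset[OF assms(1), of "prime_factorization n"] assms(2)
  by (simp add: prime_gt_0_nat in_prime_factors_imp_prime)

lemma L_additive_wrt_imp_completely_additive_quotient:
  assumes "L_additive_wrt f h" "\<And>n. n > 0 \<Longrightarrow> h n \<noteq> 0"
  shows "completely_additive (\<lambda>n. f n / h n)"
  unfolding completely_additive_def
proof (intro allI impI)
  fix m n :: nat assume "m > 0" "n > 0"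
  moreover have "f (m * n) = f m * h n + f n * h m" "h (m * n) = h m * h n"
    using assms(1) \<open>m > 0\<close> \<open>n > 0\<close>
    unfolding L_additive_wrt_def completely_multiplicative_def by auto
  ultimately show "f (m * n) / h (m * n) = f m / h m + f n / h n"
    using assms(2) by (simp add: field_simps)
qed

lemma gen_mangoldt_prime_power:
  assumes "prime p" "k > 0"
  shows "gen_mangoldt f h (p ^ k) = f p / h p"
proof -
  have "(THE q. prime q \<and> (\<exists>j\<ge>1. p ^ k = q ^ j)) = p"
  proof (rule the_equality)
    show "prime p \<and> (\<exists>j\<ge>1. p ^ k = p ^ j)"
      using assms by (intro conjI exI[of _ k]) auto
  next
    fix q assume "prime q \<and> (\<exists>j\<ge>1. p ^ k = q ^ j)"
    then show "q = p"
      using prime_power_inj'(1)[of p q k] assms by auto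
  qed
  moreover have "\<exists>q j. prime q \<and> j \<ge> 1 \<and> p ^ k = q ^ j"
    using assms by (intro exI[of _ p] exI[of _ k]) auto
  ultimately show ?thesis
    unfolding gen_mangoldt_def by (simp add: Let_def)
qed

lemma gen_mangoldt_altdef:
  "gen_mangoldt f h d = (if primepow d then f (aprimedivisor d) / h (aprimedivisor d) else 0)"
proof (cases "primepow d")
  case True
  then obtain p k where "prime p" "k > 0" "d = p ^ k"
    unfolding primepow_def by blast
  then show ?thesis
    by (simp add: gen_mangoldt_prime_power aprimedivisor_prime_power)
next
  case False
  then have "\<not> (\<exists>p k. prime p \<and> k \<ge> 1 \<and> d = p ^ k)"
    unfolding primepow_def by (auto simp: Suc_le_eq)
  with False show ?thesis
    unfolding gen_mangoldt_def by (simp only: if_not_P if_False)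
qed

lemma sum_divisors_gen_mangoldt:
  assumes "n > 0"
  shows "(\<Sum>d | d dvd n. gen_mangoldt f h d) = (\<Sum>p\<in>#prime_factorization n. f p / h p)"
proof -
  have "(\<Sum>d | d dvd n. gen_mangoldt f h d)
      = (\<Sum>d\<in>primepow_factors n. f (aprimedivisor d) / h (aprimedivisor d))"
    using assms
    by (intro sum.mono_neutral_cong_right) (auto simp: primepow_factors_def gen_mangoldt_altdef)
  also have "\<dots> = (\<Sum>p\<in>#prime_factorization n. f p / h p)"
    using assms by (intro sum_prime_factorization_conv_sum_primepow_factors) simp
  finally show ?thesis .
qed

lemma dirichlet_conv_completely_multiplicative_times:
  assumes "completely_multiplicative h" "n > 0"
  shows "dirichlet_conv h (\<lambda>k. h k * G k) n = h n * (\<Sum>d | d dvd n. G d)"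
proof -
  have "dirichlet_conv h (\<lambda>k. h k * G k) n = (\<Sum>d | d dvd n. h n * G (n div d))"
    unfolding dirichlet_conv_def
  proof (intro sum.cong refl)
    fix d assume "d \<in> {d. d dvd n}"
    then obtain e where "n = d * e" by auto
    with assms show "h d * (h (n div d) * G (n div d)) = h n * G (n div d)"
      unfolding completely_multiplicative_def by auto
  qed
  also have "\<dots> = h n * (\<Sum>d | d dvd n. G (n div d))"
    by (simp add: sum_distrib_left)
  also have "(\<Sum>d | d dvd n. G (n div d)) = (\<Sum>d | d dvd n. G d)"
    using assms(2)
    by (intro sum.reindex_bij_witness[where i="\<lambda>d. n div d" and j="\<lambda>d. n div d"])
       (auto elim!: dvdE)
  finally show ?thesis .
qed

theorem theorem2p1:
  fixes f h :: "nat \<Rightarrow> complex"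
  assumes "L_additive_wrt f h"
    and "\<And>n. n \<ge> 1 \<Longrightarrow> h n \<noteq> 0"
  shows "\<forall>n\<ge>1. f n = h n * (\<Sum>d | d dvd n. gen_mangoldt f h d)
           \<and> f n = dirichlet_conv h (\<lambda>k. h k * gen_mangoldt f h k) n"
proof (intro allI impI)
  fix n :: nat assume "n \<ge> 1"
  then have "n > 0" by simp
  have h_nonzero: "\<And>m. m > 0 \<Longrightarrow> h m \<noteq> 0"
    using assms(2) by (simp add: Suc_le_eq)
  have "f n / h n = (\<Sum>p\<in>#prime_factorization n. f p / h p)"
    using completely_additive_eq_sum_prime_factorization[OF
          L_additive_wrt_imp_completely_additive_quotient[OF assms(1) h_nonzero] \<open>n > 0\<close>] .
  also have "\<dots> = (\<Sum>d | d dvd n. gen_mangoldt f h d)"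
    using sum_divisors_gen_mangoldt[OF \<open>n > 0\<close>] by simp
  finally have divisor_sum: "f n = h n * (\<Sum>d | d dvd n. gen_mangoldt f h d)"
    using h_nonzero[OF \<open>n > 0\<close>] by (simp add: field_simps)
  moreover have "completely_multiplicative h"
    using assms(1) unfolding L_additive_wrt_def by simp
  ultimately show "f n = h n * (\<Sum>d | d dvd n. gen_mangoldt f h d)
           \<and> f n = dirichlet_conv h (\<lambda>k. h k * gen_mangoldt f h k) n"
    using dirichlet_conv_completely_multiplicative_times \<open>n > 0\<close> by simp
qed

end
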